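(* Let $T$ be a tree with $m$ edges satisfying $\sum_{e_{uv}\in E(T)}(d_u+d_v)=4m$, and let $s$ be a positive integer. Then the $s$-th subdivision tree $T_s$ is neutral.
   Context: All graphs are finite, simple and connected; $d_u$ denotes the degree of $u$ and sums over edges $e_{uv}$ count each edge once. The $s$-th subdivision graph $G_s$ of a graph $G$ is obtained by inserting $s$ new vertices into each edge of $G$ (i.e., replacing each edge by a path with $s$ internal vertices). For a graph $G=(V,E)$ with $m=|E|\geq1$, the assortativity coefficient is $$r(G)=\frac{m^{-1}\sum_{e_{uv}\in E} d_{u}d_{v}-\Big[m^{-1}\sum_{e_{uv}\in E} \tfrac{1}{2}(d_{u}+d_{v})\Big]^{2}}{m^{-1}\sum_{e_{uv}\in E} \tfrac{1}{2}(d^{2}_{u}+d^{2}_{v})-\Big[m^{-1}\sum_{e_{uv}\in E} \tfrac{1}{2}(d_{u}+d_{v})\Big]^{2}},$$ defined whenever the denominator is nonzero; $G$ is neutral if $r(G)$ is defined and equals $0$. *)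

theory Defs
  imports Complex_Main
begin

definition simple_graph :: "'a set \<Rightarrow> 'a set set \<Rightarrow> bool" where
  "simple_graph V E \<longleftrightarrow> finite V \<and>
     (\<forall>e\<in>E. \<exists>u v. e = {u, v} \<and> u \<noteq> v \<and> u \<in> V \<and> v \<in> V)"

definition adj :: "'a set set \<Rightarrow> 'a \<Rightarrow> 'a \<Rightarrow> bool" where
  "adj E u v \<longleftrightarrow> {u, v} \<in> E"

definition connected_graph :: "'a set \<Rightarrow> 'a set set \<Rightarrow> bool" where
  "connected_graph V E \<longleftrightarrow> V \<noteq> {} \<and> (\<forall>u\<in>V. \<forall>v\<in>V. (adj E)\<^sup>*\<^sup>* u v)"

definition is_cycle :: "'a set set \<Rightarrow> 'a list \<Rightarrow> bool" where
  "is_cycle E cs \<longleftrightarrow> length cs \<ge> 3 \<and> distinct cs \<and>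
     (\<forall>i. Suc i < length cs \<longrightarrow> adj E (cs ! i) (cs ! Suc i)) \<and>
     adj E (last cs) (hd cs)"

definition is_tree :: "'a set \<Rightarrow> 'a set set \<Rightarrow> bool" where
  "is_tree V E \<longleftrightarrow> simple_graph V E \<and> connected_graph V E \<and> (\<nexists>cs. is_cycle E cs)"

definition degree :: "'a set set \<Rightarrow> 'a \<Rightarrow> nat" where
  "degree E u = card {e \<in> E. u \<in> e}"

text \<open>Original vertex v becomes Inl v; the i-th inserted vertex
  (1 \<le> i \<le> s) on edge e becomes Inr (e, i). The path runs from a chosen endpoint
  end1 e through Inr (e,1), ..., Inr (e,s) to the other endpoint end2 e.\<close>

definition end1 :: "'a set \<Rightarrow> 'a" where
  "end1 e = (SOME x. x \<in> e)"

definition end2 :: "'a set \<Rightarrow> 'a" where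
  "end2 e = (SOME y. y \<in> e \<and> y \<noteq> end1 e)"

definition subdiv_V :: "nat \<Rightarrow> 'a set \<Rightarrow> 'a set set \<Rightarrow> ('a + 'a set \<times> nat) set" where
  "subdiv_V s V E = Inl ` V \<union> {Inr (e, i) | e i. e \<in> E \<and> 1 \<le> i \<and> i \<le> s}"

definition subdiv_E :: "nat \<Rightarrow> 'a set set \<Rightarrow> ('a + 'a set \<times> nat) set set" where
  "subdiv_E s E =
     {{Inl (end1 e), Inr (e, 1)} | e. e \<in> E}
   \<union> {{Inr (e, i), Inr (e, Suc i)} | e i. e \<in> E \<and> 1 \<le> i \<and> i < s}
   \<union> {{Inr (e, s), Inl (end2 e)} | e. e \<in> E}"

definition assort_mean :: "'a set set \<Rightarrow> real" where
  "assort_mean E = (\<Sum>e\<in>E. (\<Sum>x\<in>e. real (degree E x)) / 2) / real (card E)"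

definition assort_num :: "'a set set \<Rightarrow> real" where
  "assort_num E = (\<Sum>e\<in>E. \<Prod>x\<in>e. real (degree E x)) / real (card E) - (assort_mean E)\<^sup>2"

definition assort_den :: "'a set set \<Rightarrow> real" where
  "assort_den E = (\<Sum>e\<in>E. (\<Sum>x\<in>e. (real (degree E x))\<^sup>2) / 2) / real (card E)
                    - (assort_mean E)\<^sup>2"

definition assortativity :: "'a set set \<Rightarrow> real" where
  "assortativity E = assort_num E / assort_den E"

text \<open>Neutral: r defined (m \<ge> 1 and nonzero denominator) and r = 0.\<close>
definition neutral :: "'a set set \<Rightarrow> bool" where
  "neutral E \<longleftrightarrow> finite E \<and> card E \<ge> 1 \<and> assort_den E \<noteq> 0 \<and> assortativity E = 0"

end

theory Submission
  imports Defs
begin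

text \<open>In the subdivision every inserted vertex has degree 2 and every original vertex keeps
  its degree, so an edge whose ends have degrees \<open>a\<close> and \<open>b\<close> becomes a path whose edges have
  end degrees \<open>(a, 2), (2, 2), \<dots>, (2, 2), (2, b)\<close>. The hypothesis says that the end degrees
  of the tree average 2; then the end degrees of the subdivision also average 2 and their
  products average 4, so the numerator of the assortativity vanishes. The denominator is the
  mean of \<open>(d\<^sub>x - 2)\<^sup>2\<close> over the edge ends of the tree, divided by \<open>s + 1\<close>; it is positive
  because a tree has a leaf.\<close>

lemma finite_edges_if_simple_graph:
  assumes "simple_graph V E"
  shows "finite E"
proof (rule finite_subset)
  show "E \<subseteq> Pow V"
  proof
    fix e assume "e \<in> E"
    then obtain u v where "e = {u, v}" "u \<in> V" "v \<in> V"
      using assms unfolding simple_graph_def by blast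
    then show "e \<in> Pow V" by simp
  qed
  show "finite (Pow V)" using assms unfolding simple_graph_def by simp
qed

lemma card_edge_if_simple_graph:
  assumes "simple_graph V E" "e \<in> E"
  shows "card e = 2"
proof -
  obtain u v where "e = {u, v}" "u \<noteq> v" using assms unfolding simple_graph_def by blast
  then show ?thesis by simp
qed

definition simple_path :: "'a set \<Rightarrow> 'a set set \<Rightarrow> 'a list \<Rightarrow> bool" where
  "simple_path V E p \<longleftrightarrow> distinct p \<and> set p \<subseteq> V \<and> length p \<ge> 2 \<and>
     (\<forall>i. Suc i < length p \<longrightarrow> adj E (p ! i) (p ! Suc i))"

lemma simple_path_adj:
  assumes "simple_path V E p" "Suc i < length p"
  shows "adj E (p ! i) (p ! Suc i)"
  using assms unfolding simple_path_def by blast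

lemma longest_simple_path_exists:
  assumes "finite V" "simple_path V E p0"
  obtains p where "simple_path V E p" "\<And>q. simple_path V E q \<Longrightarrow> length q \<le> length p"
proof -
  let ?P = "{p. simple_path V E p}"
  have "length p \<le> card V" if "simple_path V E p" for p
  proof -
    have "length p = card (set p)" using that by (simp add: simple_path_def distinct_card)
    also have "\<dots> \<le> card V" using that assms(1) by (intro card_mono) (auto simp: simple_path_def)
    finally show ?thesis .
  qed
  hence "?P \<subseteq> {xs. set xs \<subseteq> V \<and> length xs \<le> card V}"
    by (auto simp: simple_path_def)
  hence "finite ?P"
    using finite_lists_length_le[OF assms(1)] finite_subset by blast
  hence fin: "finite (length ` ?P)" by simp
  have "Max (length ` ?P) \<in> length ` ?P" using fin assms(2) by (intro Max_in) auto
  then obtain p where "simple_path V E p" "length p = Max (length ` ?P)" by auto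
  moreover have "length q \<le> Max (length ` ?P)" if "simple_path V E q" for q
    using fin that by (intro Max_ge) auto
  ultimately show ?thesis using that by simp
qed

lemma simple_path_Cons:
  assumes "simple_path V E (x # p)" "adj E z x" "z \<in> V" "z \<notin> set (x # p)"
  shows "simple_path V E (z # x # p)"
  unfolding simple_path_def
proof (intro conjI allI impI)
  show "distinct (z # x # p)" "set (z # x # p) \<subseteq> V" "2 \<le> length (z # x # p)"
    using assms unfolding simple_path_def by auto
  show "adj E ((z # x # p) ! i) ((z # x # p) ! Suc i)" if "Suc i < length (z # x # p)" for i
    using assms(1,2) that unfolding simple_path_def by (cases i) auto
qed

lemma cycle_if_simple_path_closes:
  assumes "simple_path V E p" "2 \<le> j" "j < length p" "adj E (p ! j) (hd p)"
  shows "is_cycle E (take (Suc j) p)"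
  unfolding is_cycle_def
proof (intro conjI allI impI)
  show "3 \<le> length (take (Suc j) p)" "distinct (take (Suc j) p)"
    using assms(1-3) unfolding simple_path_def by simp_all
  show "adj E (take (Suc j) p ! i) (take (Suc j) p ! Suc i)" if "Suc i < length (take (Suc j) p)" for i
    using assms(1) that unfolding simple_path_def by simp
  have "last (take (Suc j) p) = p ! j" using assms(3) by (simp add: take_Suc_conv_app_nth)
  moreover have "hd (take (Suc j) p) = hd p" by simp
  ultimately show "adj E (last (take (Suc j) p)) (hd (take (Suc j) p))" using assms(4) by simp
qed

lemma other_edge_if_degree_ne_1:
  assumes "e \<in> E" "x \<in> e" "degree E x \<noteq> 1"
  obtains e' where "e' \<in> E" "x \<in> e'" "e' \<noteq> e"
proof -
  have "{e' \<in> E. x \<in> e'} \<noteq> {e}"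
  proof
    assume "{e' \<in> E. x \<in> e'} = {e}"
    then have "degree E x = 1" unfolding degree_def by simp
    with assms(3) show False by simp
  qed
  moreover have "e \<in> {e' \<in> E. x \<in> e'}" using assms(1,2) by simp
  ultimately obtain e' where "e' \<in> {e' \<in> E. x \<in> e'}" "e' \<noteq> e" by blast
  then show ?thesis using that by blast
qed

lemma edge_other_end:
  assumes "simple_graph V E" "e \<in> E" "x \<in> e"
  obtains z where "e = {x, z}" "z \<noteq> x" "z \<in> V"
proof -
  obtain a b where ab: "e = {a, b}" "a \<noteq> b" "a \<in> V" "b \<in> V"
    using assms(1,2) unfolding simple_graph_def by blast
  show ?thesis
  proof (cases "a = x")
    case True
    then show ?thesis using that ab by blast
  next
    case False
    then have "e = {x, a}" using assms(3) ab(1) by auto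
    then show ?thesis using that False ab(3) by blast
  qed
qed

lemma degree_first_of_longest_simple_path:
  assumes "simple_graph V E" "\<nexists>cs. is_cycle E cs"
    and p: "simple_path V E p" and xyr: "p = x # y # r"
    and longest: "\<And>q. simple_path V E q \<Longrightarrow> length q \<le> length p"
  shows "degree E x = 1"
proof (rule ccontr)
  assume "degree E x \<noteq> 1"
  have "adj E (p ! 0) (p ! Suc 0)" using simple_path_adj[OF p, of 0] xyr by simp
  then have "{x, y} \<in> E" unfolding adj_def xyr by simp
  then obtain e' where e': "e' \<in> E" "x \<in> e'" "e' \<noteq> {x, y}"
    using other_edge_if_degree_ne_1[of "{x, y}" E x] \<open>degree E x \<noteq> 1\<close> by auto
  obtain z where z: "e' = {x, z}" "z \<noteq> x" "z \<in> V"
    using edge_other_end[OF assms(1) e'(1,2)] .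
  have "z \<noteq> y" using z e' by auto
  have "adj E z x" using e'(1) z(1) unfolding adj_def by (simp add: insert_commute)
  show False
  proof (cases "z \<in> set p")
    case False
    then have "simple_path V E (z # p)"
      using simple_path_Cons[of V E x "y # r" z] p \<open>adj E z x\<close> z(3) unfolding xyr by simp
    then show False using longest[of "z # p"] by simp
  next
    case True
    then obtain j where j: "j < length p" "p ! j = z" by (meson in_set_conv_nth)
    have "p ! 0 = x" "p ! 1 = y" unfolding xyr by simp_all
    then have "j \<noteq> 0" "j \<noteq> 1" using j(2) z(2) \<open>z \<noteq> y\<close> by (intro notI; simp)+
    then have "is_cycle E (take (Suc j) p)"
      using cycle_if_simple_path_closes[OF p, of j] j \<open>adj E z x\<close> xyr by simp
    then show False using assms(2) by blast
  qed
qed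

lemma acyclic_graph_has_leaf:
  assumes "simple_graph V E" "\<nexists>cs. is_cycle E cs" "E \<noteq> {}"
  obtains e x where "e \<in> E" "x \<in> e" "degree E x = 1"
proof -
  have fin: "finite V" using assms(1) unfolding simple_graph_def by blast
  obtain e0 where "e0 \<in> E" using assms(3) by blast
  then obtain u v where "e0 = {u, v}" "u \<noteq> v" "u \<in> V" "v \<in> V"
    using assms(1) unfolding simple_graph_def by blast
  with \<open>e0 \<in> E\<close> have "simple_path V E [u, v]"
    unfolding simple_path_def adj_def by (auto simp: less_Suc_eq)
  then obtain p where p: "simple_path V E p"
    and longest: "\<And>q. simple_path V E q \<Longrightarrow> length q \<le> length p"
    using longest_simple_path_exists[OF fin] by blast
  have "2 \<le> length p" using p unfolding simple_path_def by blast
  then obtain x y r where xyr: "p = x # y # r" by (auto simp: numeral_2_eq_2 Suc_le_length_iff)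
  have "adj E (p ! 0) (p ! Suc 0)" using simple_path_adj[OF p, of 0] xyr by simp
  then have "{x, y} \<in> E" unfolding adj_def xyr by simp
  moreover have "degree E x = 1"
    using degree_first_of_longest_simple_path[OF assms(1,2) p xyr longest] .
  ultimately show ?thesis using that by blast
qed

lemma end1_end2_if_card_2:
  assumes "card e = 2"
  shows "end1 e \<noteq> end2 e" and "e = {end1 e, end2 e}"
proof -
  obtain u v where e: "e = {u, v}" "u \<noteq> v" using assms by (meson card_2_iff)
  then have end1: "end1 e \<in> e" unfolding end1_def by (metis insertI1 someI)
  have "\<exists>y. y \<in> e \<and> y \<noteq> end1 e"
  proof (cases "end1 e = u")
    case True
    then show ?thesis using e by (intro exI[of _ v]) simp
  next
    case False
    then show ?thesis using e by (intro exI[of _ u]) simp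
  qed
  then have end2: "end2 e \<in> e \<and> end2 e \<noteq> end1 e" unfolding end2_def by (rule someI_ex)
  then show ne: "end1 e \<noteq> end2 e" by auto
  show "e = {end1 e, end2 e}"
  proof (rule card_subset_eq[symmetric])
    show "finite e" using e(1) by simp
    show "{end1 e, end2 e} \<subseteq> e" using end1 end2 by simp
    show "card {end1 e, end2 e} = card e" using assms ne by simp
  qed
qed

text \<open>Edge \<open>i\<close> (\<open>0 \<le> i \<le> s\<close>) of the path replacing \<open>e\<close>, whose vertices are, in order,
  \<open>Inl (end1 e), Inr (e, 1), \<dots>, Inr (e, s), Inl (end2 e)\<close>.\<close>

definition subdiv_edge :: "nat \<Rightarrow> 'a set \<Rightarrow> nat \<Rightarrow> ('a + 'a set \<times> nat) set" where
  "subdiv_edge s e i = {if i = 0 then Inl (end1 e) else Inr (e, i),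
                        if i = s then Inl (end2 e) else Inr (e, Suc i)}"

lemma subdiv_E_eq_image:
  assumes "s \<ge> 1"
  shows "subdiv_E s E = (\<lambda>(e, i). subdiv_edge s e i) ` (E \<times> {0..s})"
proof -
  let ?f = "\<lambda>(e, i). subdiv_edge s e i"
  have "E \<times> {0..s} = E \<times> {0} \<union> E \<times> {1..<s} \<union> E \<times> {s}" using assms by auto
  then have split: "?f ` (E \<times> {0..s}) = ?f ` (E \<times> {0}) \<union> ?f ` (E \<times> {1..<s}) \<union> ?f ` (E \<times> {s})"
    by (simp only: image_Un)
  have "E \<times> {i} = (\<lambda>e. (e, i)) ` E" for i :: nat by auto
  then have first: "?f ` (E \<times> {0}) = {{Inl (end1 e), Inr (e, 1)} | e. e \<in> E}"
    and last: "?f ` (E \<times> {s}) = {{Inr (e, s), Inl (end2 e)} | e. e \<in> E}"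
    using assms by (simp_all add: image_image subdiv_edge_def Setcompr_eq_image)
  have middle: "?f ` (E \<times> {1..<s}) = {{Inr (e, i), Inr (e, Suc i)} | e i. e \<in> E \<and> 1 \<le> i \<and> i < s}"
    unfolding subdiv_edge_def by force
  show ?thesis unfolding subdiv_E_def split first middle last ..
qed

lemma Inl_mem_subdiv_edge:
  "Inl v \<in> subdiv_edge s e i \<longleftrightarrow> (i = 0 \<and> v = end1 e) \<or> (i = s \<and> v = end2 e)"
  by (auto simp: subdiv_edge_def)

lemma Inr_mem_subdiv_edge:
  "Inr (e', k) \<in> subdiv_edge s e i \<longleftrightarrow> e' = e \<and> ((i \<noteq> 0 \<and> k = i) \<or> (i \<noteq> s \<and> k = Suc i))"
  by (auto simp: subdiv_edge_def)

lemma sum_edge_ends: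
  assumes "card e = 2"
  shows "(\<Sum>x\<in>e. g x) = g (end1 e) + g (end2 e)"
proof -
  note ends = end1_end2_if_card_2[OF assms]
  have "(\<Sum>x\<in>e. g x) = (\<Sum>x\<in>{end1 e, end2 e}. g x)" by (rule arg_cong[OF ends(2)])
  also have "\<dots> = g (end1 e) + g (end2 e)" using ends(1) by simp
  finally show ?thesis .
qed

lemma inj_on_subdiv_edge:
  assumes "s \<ge> 1" "\<forall>e\<in>E. card e = 2"
  shows "inj_on (\<lambda>(e, i). subdiv_edge s e i) (E \<times> {0..s})"
proof (rule inj_onI, clarify)
  fix e i e' i'
  assume e: "e \<in> E" "i \<in> {0..s}" "e' \<in> E" "i' \<in> {0..s}"
    and eq: "subdiv_edge s e i = subdiv_edge s e' i'"
  have "Inr (e, max i 1) \<in> subdiv_edge s e i"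
    using assms(1) unfolding Inr_mem_subdiv_edge by (cases "i = 0") auto
  then have "e' = e" unfolding eq Inr_mem_subdiv_edge by simp
  moreover have "i = i'"
  proof (cases "i = 0 \<or> i' = 0")
    case True
    have "end1 e \<noteq> end2 e" using bspec[OF assms(2) e(1)] by (rule end1_end2_if_card_2)
    then have "Inl (end1 e) \<in> subdiv_edge s e k \<longleftrightarrow> k = 0" for k
      unfolding Inl_mem_subdiv_edge by auto
    then show ?thesis using True eq \<open>e' = e\<close> by metis
  next
    case False
    then have "Inr (e, i) \<in> subdiv_edge s e i" "Inr (e, i') \<in> subdiv_edge s e i'"
      unfolding Inr_mem_subdiv_edge by simp_all
    then have "Inr (e, i) \<in> subdiv_edge s e i'" "Inr (e, i') \<in> subdiv_edge s e i"
      using eq \<open>e' = e\<close> by simp_all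
    then have "i = i' \<or> i = Suc i'" "i' = i \<or> i' = Suc i"
      unfolding Inr_mem_subdiv_edge by blast+
    then show ?thesis by linarith
  qed
  ultimately show "e = e' \<and> i = i'" by simp
qed

lemma sum_subdiv_E:
  assumes "s \<ge> 1" "\<forall>e\<in>E. card e = 2"
  shows "(\<Sum>f\<in>subdiv_E s E. g f) = (\<Sum>e\<in>E. \<Sum>i=0..s. g (subdiv_edge s e i))"
proof -
  have "(\<Sum>f\<in>subdiv_E s E. g f) = (\<Sum>p\<in>E \<times> {0..s}. g (subdiv_edge s (fst p) (snd p)))"
    unfolding subdiv_E_eq_image[OF assms(1)] using sum.reindex[OF inj_on_subdiv_edge[OF assms]]
    by (simp add: case_prod_beta')
  also have "\<dots> = (\<Sum>e\<in>E. \<Sum>i=0..s. g (subdiv_edge s e i))"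
    by (rule sum.cartesian_product[symmetric, unfolded split_def])
  finally show ?thesis .
qed

lemma card_subdiv_E:
  assumes "s \<ge> 1" "\<forall>e\<in>E. card e = 2"
  shows "card (subdiv_E s E) = (s + 1) * card E"
  unfolding subdiv_E_eq_image[OF assms(1)]
  by (simp add: card_image[OF inj_on_subdiv_edge[OF assms]] card_cartesian_product)

lemma degree_subdiv_E:
  assumes "s \<ge> 1" "\<forall>e\<in>E. card e = 2" "finite E"
  shows "degree (subdiv_E s E) w = (\<Sum>e\<in>E. card {i \<in> {0..s}. w \<in> subdiv_edge s e i})"
proof -
  let ?f = "\<lambda>(e, i). subdiv_edge s e i"
  let ?I = "Sigma E (\<lambda>e. {i \<in> {0..s}. w \<in> subdiv_edge s e i})"
  have "{f \<in> subdiv_E s E. w \<in> f} = ?f ` ?I"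
    unfolding subdiv_E_eq_image[OF assms(1)] by auto
  moreover have "inj_on ?f ?I"
    using inj_on_subdiv_edge[OF assms(1,2)] by (rule inj_on_subset) auto
  ultimately have "degree (subdiv_E s E) w = card ?I"
    unfolding degree_def by (simp add: card_image)
  also have "\<dots> = (\<Sum>e\<in>E. card {i \<in> {0..s}. w \<in> subdiv_edge s e i})"
    using assms(3) by (simp add: card_SigmaI)
  finally show ?thesis .
qed

lemma degree_subdiv_E_Inl:
  assumes "s \<ge> 1" "\<forall>e\<in>E. card e = 2" "finite E"
  shows "degree (subdiv_E s E) (Inl v) = degree E v"
proof -
  have "card {i \<in> {0..s}. Inl v \<in> subdiv_edge s e i} = (if v \<in> e then 1 else 0)" if "e \<in> E" for e
  proof -
    note ends = end1_end2_if_card_2[OF bspec[OF assms(2) that]]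
    have "{i \<in> {0..s}. Inl v \<in> subdiv_edge s e i}
        = (if v = end1 e then {0} else {}) \<union> (if v = end2 e then {s} else {})"
      unfolding Inl_mem_subdiv_edge by auto
    then show ?thesis using assms(1) ends by (subst ends(2)) auto
  qed
  then have "(\<Sum>e\<in>E. card {i \<in> {0..s}. Inl v \<in> subdiv_edge s e i}) = (\<Sum>e\<in>E. if v \<in> e then 1 else 0)"
    by (intro sum.cong) auto
  then have "degree (subdiv_E s E) (Inl v) = (\<Sum>e\<in>E. if v \<in> e then 1 else 0)"
    using degree_subdiv_E[OF assms] by simp
  also have "\<dots> = degree E v"
    unfolding degree_def using assms(3) by (simp add: sum.inter_filter[symmetric])
  finally show ?thesis .
qed

lemma degree_subdiv_E_Inr:
  assumes "s \<ge> 1" "\<forall>e\<in>E. card e = 2" "finite E"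
    and "e0 \<in> E" "1 \<le> j" "j \<le> s"
  shows "degree (subdiv_E s E) (Inr (e0, j)) = 2"
proof -
  have "{i \<in> {0..s}. Inr (e0, j) \<in> subdiv_edge s e i} = (if e = e0 then {j - 1, j} else {})" for e
    unfolding Inr_mem_subdiv_edge using assms(5,6) by auto
  then have "card {i \<in> {0..s}. Inr (e0, j) \<in> subdiv_edge s e i} = (if e = e0 then 2 else 0)" for e
    using assms(5) by simp
  then show ?thesis
    using degree_subdiv_E[OF assms(1-3)] assms(3,4) by simp
qed

lemma sum_subdiv_E_paths:
  assumes "s \<ge> 1" "\<forall>e\<in>E. card e = 2"
  shows "(\<Sum>f\<in>subdiv_E s E. g f) =
    (\<Sum>e\<in>E. g {Inl (end1 e), Inr (e, 1)} + g {Inr (e, s), Inl (end2 e)}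
             + (\<Sum>i\<in>{1..<s}. g {Inr (e, i), Inr (e, Suc i)}))"
proof -
  have "(\<Sum>i=0..s. g (subdiv_edge s e i)) = g {Inl (end1 e), Inr (e, 1)} + g {Inr (e, s), Inl (end2 e)}
             + (\<Sum>i\<in>{1..<s}. g {Inr (e, i), Inr (e, Suc i)})" for e
  proof -
    have "{0..s} = insert 0 (insert s {1..<s})" using assms(1) by auto
    then have "(\<Sum>i=0..s. g (subdiv_edge s e i)) =
        g (subdiv_edge s e 0) + g (subdiv_edge s e s) + (\<Sum>i\<in>{1..<s}. g (subdiv_edge s e i))"
      using assms(1) by (simp add: add.assoc)
    moreover have "(\<Sum>i\<in>{1..<s}. g (subdiv_edge s e i)) = (\<Sum>i\<in>{1..<s}. g {Inr (e, i), Inr (e, Suc i)})"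
      by (intro sum.cong) (auto simp: subdiv_edge_def)
    ultimately show ?thesis using assms(1) by (simp add: subdiv_edge_def)
  qed
  then show ?thesis unfolding sum_subdiv_E[OF assms] by simp
qed

lemma sum_sum_endpoint_degrees_subdiv_E:
  fixes h :: "real \<Rightarrow> real"
  assumes "s \<ge> 1" "\<forall>e\<in>E. card e = 2" "finite E"
  shows "(\<Sum>f\<in>subdiv_E s E. \<Sum>x\<in>f. h (degree (subdiv_E s E) x)) =
    (\<Sum>e\<in>E. \<Sum>x\<in>e. h (degree E x)) + 2 * real s * real (card E) * h 2"
proof -
  have "(\<Sum>x\<in>{Inl (end1 e), Inr (e, 1)}. h (degree (subdiv_E s E) x))
      + (\<Sum>x\<in>{Inr (e, s), Inl (end2 e)}. h (degree (subdiv_E s E) x))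
      + (\<Sum>i\<in>{1..<s}. \<Sum>x\<in>{Inr (e, i), Inr (e, Suc i)}. h (degree (subdiv_E s E) x))
    = (\<Sum>x\<in>e. h (degree E x)) + 2 * real s * h 2" if "e \<in> E" for e
  proof -
    have "(\<Sum>i\<in>{1..<s}. \<Sum>x\<in>{Inr (e, i), Inr (e, Suc i)}. h (degree (subdiv_E s E) x))
        = (\<Sum>i\<in>{1..<s}. 2 * h 2)"
      using degree_subdiv_E_Inr[OF assms that] by (intro sum.cong) auto
    then show ?thesis
      using degree_subdiv_E_Inl[OF assms] degree_subdiv_E_Inr[OF assms that] assms(1)
      by (simp add: sum_edge_ends[OF bspec[OF assms(2) that]] of_nat_diff algebra_simps)
  qed
  then show ?thesis
    unfolding sum_subdiv_E_paths[OF assms(1,2)] by (simp add: sum.distrib sum_distrib_right)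
qed

lemma sum_prod_endpoint_degrees_subdiv_E:
  assumes "s \<ge> 1" "\<forall>e\<in>E. card e = 2" "finite E"
  shows "(\<Sum>f\<in>subdiv_E s E. \<Prod>x\<in>f. real (degree (subdiv_E s E) x)) =
    2 * (\<Sum>e\<in>E. \<Sum>x\<in>e. real (degree E x)) + 4 * (real s - 1) * real (card E)"
proof -
  have "(\<Prod>x\<in>{Inl (end1 e), Inr (e, 1)}. real (degree (subdiv_E s E) x))
      + (\<Prod>x\<in>{Inr (e, s), Inl (end2 e)}. real (degree (subdiv_E s E) x))
      + (\<Sum>i\<in>{1..<s}. \<Prod>x\<in>{Inr (e, i), Inr (e, Suc i)}. real (degree (subdiv_E s E) x))
    = 2 * (\<Sum>x\<in>e. real (degree E x)) + 4 * (real s - 1)" if "e \<in> E" for e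
  proof -
    have "(\<Sum>i\<in>{1..<s}. \<Prod>x\<in>{Inr (e, i), Inr (e, Suc i)}. real (degree (subdiv_E s E) x))
        = (\<Sum>i\<in>{1..<s}. 4)"
      using degree_subdiv_E_Inr[OF assms that] by (intro sum.cong) auto
    then show ?thesis
      using degree_subdiv_E_Inl[OF assms] degree_subdiv_E_Inr[OF assms that] assms(1)
      by (simp add: sum_edge_ends[OF bspec[OF assms(2) that]] of_nat_diff algebra_simps)
  qed
  then show ?thesis
    unfolding sum_subdiv_E_paths[OF assms(1,2)] by (simp add: sum.distrib sum_distrib_left)
qed

lemma sum_sq_endpoint_degrees_gt:
  assumes "finite E" "\<forall>e\<in>E. card e = 2"
    and "(\<Sum>e\<in>E. \<Sum>x\<in>e. real (degree E x)) = 4 * real (card E)"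
    and "e0 \<in> E" "x0 \<in> e0" "degree E x0 \<noteq> 2"
  shows "(\<Sum>e\<in>E. \<Sum>x\<in>e. (real (degree E x))\<^sup>2) > 8 * real (card E)"
proof -
  let ?d = "\<lambda>x. real (degree E x)"
  have "(\<Sum>x\<in>e. (?d x - 2)\<^sup>2) = (\<Sum>x\<in>e. (?d x)\<^sup>2) - 4 * (\<Sum>x\<in>e. ?d x) + 8" if "e \<in> E" for e
    using bspec[OF assms(2) that] by (simp add: sum_edge_ends power2_eq_square algebra_simps)
  then have "(\<Sum>e\<in>E. \<Sum>x\<in>e. (?d x - 2)\<^sup>2)
      = (\<Sum>e\<in>E. \<Sum>x\<in>e. (?d x)\<^sup>2) - 4 * (\<Sum>e\<in>E. \<Sum>x\<in>e. ?d x) + 8 * real (card E)"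
    by (simp add: sum.distrib sum_subtractf sum_distrib_left)
  also have "\<dots> = (\<Sum>e\<in>E. \<Sum>x\<in>e. (?d x)\<^sup>2) - 8 * real (card E)"
    using assms(3) by simp
  finally have sq: "(\<Sum>e\<in>E. \<Sum>x\<in>e. (?d x - 2)\<^sup>2) = (\<Sum>e\<in>E. \<Sum>x\<in>e. (?d x)\<^sup>2) - 8 * real (card E)" .
  have "finite e0" using bspec[OF assms(2,4)] by (simp add: card_ge_0_finite)
  then have "(\<Sum>x\<in>e0. (?d x - 2)\<^sup>2) > 0"
    using assms(5,6) by (intro sum_pos2[of e0 x0]) auto
  then have "(\<Sum>e\<in>E. \<Sum>x\<in>e. (?d x - 2)\<^sup>2) > 0"
    using assms(1,4) by (intro sum_pos2[of E e0]) (auto intro: sum_nonneg)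
  then show ?thesis unfolding sq by simp
qed

lemma neutral_subdiv_E:
  assumes "s \<ge> 1" "\<forall>e\<in>E. card e = 2" "finite E" "E \<noteq> {}"
    and "(\<Sum>e\<in>E. \<Sum>x\<in>e. degree E x) = 4 * card E"
    and "e0 \<in> E" "x0 \<in> e0" "degree E x0 \<noteq> 2"
  shows "neutral (subdiv_E s E)"
proof -
  define m where "m = real (card E)"
  define Q where "Q = (\<Sum>e\<in>E. \<Sum>x\<in>e. (real (degree E x))\<^sup>2)"
  let ?S = "subdiv_E s E"
  let ?D = "\<lambda>x. real (degree ?S x)"
  have K: "(\<Sum>e\<in>E. \<Sum>x\<in>e. real (degree E x)) = 4 * m"
    unfolding m_def using arg_cong[OF assms(5), of real] by simp
  have "m > 0" unfolding m_def using assms(3,4) by (simp add: card_gt_0_iff)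
  then have pos: "(real s + 1) * m > 0" "m \<noteq> 0" by simp_all
  have Q: "Q > 8 * m"
    unfolding Q_def m_def using sum_sq_endpoint_degrees_gt[OF assms(3,2) K[unfolded m_def] assms(6-8)] .
  have card: "real (card ?S) = (real s + 1) * m"
    unfolding m_def card_subdiv_E[OF assms(1,2)] by (simp add: algebra_simps)
  have "(\<Sum>f\<in>?S. (\<Sum>x\<in>f. ?D x) / 2) = 2 * ((real s + 1) * m)"
    using sum_sum_endpoint_degrees_subdiv_E[OF assms(1-3), of "\<lambda>x. x"] K
    by (simp add: sum_divide_distrib[symmetric] m_def algebra_simps)
  then have mean: "assort_mean ?S = 2"
    unfolding assort_mean_def card using pos by simp
  have "(\<Sum>f\<in>?S. \<Prod>x\<in>f. ?D x) = 4 * ((real s + 1) * m)"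
    using sum_prod_endpoint_degrees_subdiv_E[OF assms(1-3)] K by (simp add: m_def algebra_simps)
  then have num: "assort_num ?S = 0"
    unfolding assort_num_def card mean using pos by simp
  have "(\<Sum>f\<in>?S. (\<Sum>x\<in>f. (?D x)\<^sup>2) / 2) = Q / 2 + 4 * real s * m"
    using sum_sum_endpoint_degrees_subdiv_E[OF assms(1-3), of "\<lambda>x. x\<^sup>2"]
    by (simp add: sum_divide_distrib[symmetric] Q_def m_def algebra_simps)
  then have den: "assort_den ?S = (Q - 8 * m) / (2 * ((real s + 1) * m))"
    unfolding assort_den_def card mean using pos by (simp add: field_simps)
  have "card ?S > 0" using card pos by (simp flip: of_nat_0_less_iff)
  then have "finite ?S" "card ?S \<ge> 1" by (simp_all add: card_ge_0_finite)
  then show ?thesis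
    unfolding neutral_def assortativity_def num den using Q pos by simp
qed

theorem theorem1:
  fixes V :: "'a set" and E :: "'a set set" and s :: nat
  assumes "is_tree V E"
    and "card E \<ge> 1"
    and "(\<Sum>e\<in>E. \<Sum>x\<in>e. degree E x) = 4 * card E"
    and "s \<ge> 1"
  shows "neutral (subdiv_E s E)"
proof -
  have graph: "simple_graph V E" and acyclic: "\<nexists>cs. is_cycle E cs"
    using assms(1) unfolding is_tree_def by auto
  have "E \<noteq> {}" using assms(2) by auto
  then obtain e0 x0 where "e0 \<in> E" "x0 \<in> e0" "degree E x0 = 1"
    using acyclic_graph_has_leaf[OF graph acyclic] by blast
  moreover have "\<forall>e\<in>E. card e = 2" using card_edge_if_simple_graph[OF graph] by blast
  ultimately show ?thesis
    using neutral_subdiv_E[OF assms(4) _ finite_edges_if_simple_graph[OF graph] \<open>E \<noteq> {}\<close> assms(3)]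
    by simp
qed

end
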